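(* Let $r \in \mathbb{Q}_{>0}$ be such that $S_r$ is atomic. (1) If $r < 1$, then $R(S_r) = \{1, \infty\}$; in particular $S_r$ is not fully elastic. (2) If $r \in \mathbb{N}$, then $R(S_r) = \{1\}$; in particular $S_r$ is fully elastic. (3) If $r \notin \mathbb{N}$ and $\mathsf{n}(r) = \mathsf{d}(r) + 1$, then $R(S_r) = \mathbb{Q}_{\ge 1}$; in particular $S_r$ is fully elastic.
   Context: For $q \in \mathbb{Q}_{>0}$, $\mathsf{n}(q),\mathsf{d}(q)$ are the positive coprime integers with $q = \mathsf{n}(q)/\mathsf{d}(q)$. $S_r$ is the additive submonoid of $(\mathbb{Q}_{\ge 0},+)$ generated by $\{r^n : n \in \mathbb{N}_0\}$; it is atomic exactly when $r=1$ or $\mathsf{n}(r)>1$. $\mathsf{L}(x)$ denotes the set of lengths of factorizations of $x$ into atoms. The elasticity of $x \ne 0$ is $\rho(x) = \sup \mathsf{L}(x)/\inf \mathsf{L}(x) \in \mathbb{Q}_{\ge 1} \cup \{\infty\}$, $\rho(0)=1$, and $\rho(S_r) = \sup\{\rho(x) : x \ne 0\}$. The set of elasticities is $R(S_r) = \{\rho(x) : x \in S_r\}$. A monoid $M$ is fully elastic if $R(M) = \mathbb{Q} \cap [1, \rho(M)]$ when $\infty \notin R(M)$, and $R(M) \setminus \{\infty\} = \mathbb{Q} \cap [1,\infty)$ when $\infty \in R(M)$. *)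

theory Defs
  imports Complex_Main "HOL-Library.Extended_Real" "HOL-Library.Multiset"
begin

definition numer :: "rat \<Rightarrow> int" where "numer q = fst (quotient_of q)"
definition denom :: "rat \<Rightarrow> int" where "denom q = snd (quotient_of q)"

inductive_set S :: "rat \<Rightarrow> rat set" for r :: rat where
  zero: "0 \<in> S r"
| add_pow: "x \<in> S r \<Longrightarrow> x + r ^ n \<in> S r"

definition atoms :: "rat set \<Rightarrow> rat set" where
  "atoms M = {a \<in> M. a \<noteq> 0 \<and> \<not> (\<exists>b\<in>M. \<exists>c\<in>M. b \<noteq> 0 \<and> c \<noteq> 0 \<and> a = b + c)}"

definition factorizations :: "rat set \<Rightarrow> rat \<Rightarrow> rat multiset set" where
  "factorizations M x = {z. set_mset z \<subseteq> atoms M \<and> sum_mset z = x}"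

definition lengths :: "rat set \<Rightarrow> rat \<Rightarrow> nat set" where
  "lengths M x = size ` factorizations M x"

definition atomic :: "rat set \<Rightarrow> bool" where
  "atomic M \<longleftrightarrow> (\<forall>x\<in>M. x \<noteq> 0 \<longrightarrow> lengths M x \<noteq> {})"

definition elasticity :: "rat set \<Rightarrow> rat \<Rightarrow> ereal" where
  "elasticity M x = (if x = 0 then 1 else
     (SUP l\<in>lengths M x. ereal (real l)) / ereal (real (Inf (lengths M x))))"

definition monoid_elasticity :: "rat set \<Rightarrow> ereal" where
  "monoid_elasticity M = (SUP x\<in>M - {0}. elasticity M x)"

definition elasticity_set :: "rat set \<Rightarrow> ereal set" where
  "elasticity_set M = elasticity M ` M"

definition fully_elastic :: "rat set \<Rightarrow> bool" where
  "fully_elastic M \<longleftrightarrow>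
     (if \<infinity> \<notin> elasticity_set M
      then elasticity_set M = {ereal (of_rat q) | q. 1 \<le> q \<and> ereal (of_rat q) \<le> monoid_elasticity M}
      else elasticity_set M - {\<infinity>} = {ereal (of_rat q) | q. 1 \<le> q})"

end

theory Submission
  imports Defs
begin

text \<open>
  An element of \<open>S\<^sub>r\<close> is a finite sum of powers of \<open>r\<close>, i.e. a digit expansion \<open>\<Sum>i. c\<^sub>i r\<^sup>i\<close>
  whose length is \<open>\<Sum>i. c\<^sub>i\<close>. Let \<open>r = a/b\<close> in lowest terms. Clearing denominators shows that two
  expansions of the same value have lowest digits congruent modulo \<open>a\<close>; hence, if the second
  expansion has all digits below \<open>a\<close>, the first one arises from it by repeatedly trading \<open>a\<close> copies
  of \<open>r\<^sup>i\<close> for \<open>b\<close> copies of \<open>r\<^sup>i\<^sup>+\<^sup>1\<close>, and the two lengths differ by a nonnegative multiple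
  of \<open>a - b\<close>. Reading expansions from the top digit, i.e. in base \<open>1/r\<close>, gives the same with
  \<open>a\<close> and \<open>b\<close> swapped. In particular all powers of \<open>r\<close> are atoms when \<open>a, b \<ge> 2\<close>.

  For \<open>r < 1\<close> an element either has only expansions with digits below \<open>a\<close>, which then all have
  the same length, or it admits the trade \<open>a r\<^sup>i = b r\<^sup>i\<^sup>+\<^sup>1\<close> indefinitely and has unbounded lengths.
  For \<open>r = (d+1)/d\<close> the expansions with digits at most \<open>d\<close> are the shortest ones, those with
  digits below \<open>d\<close> above the constant term the longest ones, and the identity
  \<open>d r\<^sup>k = d + \<Sum>j<k. r\<^sup>j\<close>, padded by distinct higher powers, realises every ratio \<open>p/s > 1\<close>.
  For \<open>r \<in> \<nat>\<close> the only atom is \<open>1\<close>, so every factorization of \<open>x\<close> has length \<open>x\<close>.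
\<close>

lemma lengths_pos:
  assumes "x \<noteq> 0" and "n \<in> lengths M x"
  shows "0 < n"
proof -
  obtain z where "sum_mset z = x" and "n = size z"
    using assms(2) unfolding lengths_def factorizations_def by blast
  with assms(1) show ?thesis by (metis gr0I size_eq_0_iff_empty sum_mset.empty)
qed

lemma elasticity_eq_ratio:
  assumes "x \<noteq> 0" and "m \<in> lengths M x" and "n \<in> lengths M x"
    and "\<forall>l\<in>lengths M x. n \<le> l \<and> l \<le> m"
  shows "elasticity M x = ereal (of_rat (of_nat m / of_nat n))"
proof -
  have "(SUP l\<in>lengths M x. ereal (real l)) = ereal (real m)"
    using assms(2,4) by (intro SUP_eqI) auto
  moreover have "Inf (lengths M x) = n"
    using assms(3,4) by (intro cInf_eq_minimum) auto
  moreover have "0 < n" using lengths_pos[OF assms(1,3)] .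
  ultimately show ?thesis
    using assms(1) by (simp add: elasticity_def of_rat_divide)
qed

lemma elasticity_eq_one:
  assumes "x \<noteq> 0" and "lengths M x = {n}"
  shows "elasticity M x = 1"
proof -
  have "0 < n" using lengths_pos[OF assms(1)] assms(2) by blast
  then show ?thesis using elasticity_eq_ratio[of x n M n] assms by simp
qed

lemma elasticity_eq_infinity:
  assumes "x \<noteq> 0" and "\<And>k. \<exists>l\<in>lengths M x. k \<le> l"
  shows "elasticity M x = \<infinity>"
proof -
  have "Inf (lengths M x) \<in> lengths M x"
    using assms(2) by (intro Inf_nat_def1) blast
  then have "0 < Inf (lengths M x)" using lengths_pos[OF assms(1)] by blast
  moreover have "(SUP l\<in>lengths M x. ereal (real l)) = \<infinity>"
    using assms(2) by (intro SUP_PInfty) (meson of_nat_le_iff ereal_less_eq(3))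
  ultimately show ?thesis
    using assms(1) by (simp add: elasticity_def)
qed

lemma elasticity_rational:
  assumes "x \<noteq> 0" and "finite (lengths M x)" and "lengths M x \<noteq> {}"
  shows "\<exists>q\<ge>1. elasticity M x = ereal (of_rat q)"
proof -
  let ?m = "Max (lengths M x)" and ?n = "Min (lengths M x)"
  have "0 < ?n" using lengths_pos[OF assms(1)] assms(2,3) by simp
  then have "1 \<le> (of_nat ?m / of_nat ?n :: rat)" using assms(2,3) by simp
  moreover have "elasticity M x = ereal (of_rat (of_nat ?m / of_nat ?n))"
    using assms by (intro elasticity_eq_ratio) auto
  ultimately show ?thesis by blast
qed

lemma one_in_elasticity_set: "0 \<in> M \<Longrightarrow> 1 \<in> elasticity_set M"
  unfolding elasticity_set_def by (metis elasticity_def image_eqI)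

lemma fully_elastic_if_elasticity_set_eq_one:
  assumes "elasticity_set M = {1}" and "x \<in> M" and "x \<noteq> 0"
  shows "fully_elastic M"
proof -
  have "elasticity M y = 1" if "y \<in> M" for y
    using assms(1) imageI[OF that, of "elasticity M"] by (simp add: elasticity_set_def)
  then have "monoid_elasticity M = (SUP y\<in>M - {0}. 1)"
    unfolding monoid_elasticity_def by (intro SUP_cong) simp_all
  also have "\<dots> = 1"
    using assms(2,3) by (intro SUP_const) blast
  finally have elasticity_M: "monoid_elasticity M = 1" .
  have "{ereal (of_rat q) | q. 1 \<le> q \<and> ereal (of_rat q) \<le> monoid_elasticity M} = {1}"
    unfolding elasticity_M
  proof (intro equalityI subsetI)
    fix e assume "e \<in> {ereal (of_rat q) | q. 1 \<le> q \<and> ereal (of_rat q) \<le> 1}"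
    then obtain q where "e = ereal (of_rat q)" "1 \<le> q" "of_rat q \<le> (1 :: real)" by auto
    then show "e \<in> {1}" by (metis antisym of_rat_1 of_rat_less_eq one_ereal_def singletonI)
  qed (auto intro!: exI[of _ 1])
  then show ?thesis using assms(1) by (simp add: fully_elastic_def)
qed

lemma fully_elastic_if_elasticity_set_eq_all:
  assumes "elasticity_set M = {ereal (of_rat q) | q. 1 \<le> q}"
  shows "fully_elastic M"
proof -
  have "ereal (of_rat q) \<le> monoid_elasticity M" if "1 \<le> q" for q
  proof -
    have "ereal (of_rat (q + 1)) \<in> elasticity_set M" using assms that by auto
    then obtain x where "x \<in> M" and x: "elasticity M x = ereal (of_rat (q + 1))"
      unfolding elasticity_set_def by auto
    moreover have "x \<noteq> 0" using x that by (auto simp: elasticity_def)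
    ultimately have "ereal (of_rat (q + 1)) \<le> monoid_elasticity M"
      unfolding monoid_elasticity_def by (metis DiffI SUP_upper singletonD)
    moreover have "ereal (of_rat q) \<le> ereal (of_rat (q + 1))" by (simp add: of_rat_less_eq)
    ultimately show ?thesis by (rule order.trans[rotated])
  qed
  moreover have "\<infinity> \<notin> elasticity_set M" using assms by auto
  ultimately show ?thesis using assms by (auto simp: fully_elastic_def)
qed

lemma not_fully_elastic_if_elasticity_set_eq_one_infinity:
  assumes "elasticity_set M = {1, \<infinity>}"
  shows "\<not> fully_elastic M"
proof
  assume "fully_elastic M"
  then have "{1, \<infinity>} - {\<infinity>} = {ereal (of_rat q) | q. 1 \<le> q}"
    using assms by (simp add: fully_elastic_def)
  moreover have "ereal (of_rat 2) \<in> {ereal (of_rat q) | q. 1 \<le> q}"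
    by (rule CollectI, rule exI[of _ 2]) simp
  ultimately have "ereal (of_rat 2) \<in> {1, \<infinity>}" by blast
  then show False by simp
qed

definition power_sum :: "rat \<Rightarrow> nat multiset \<Rightarrow> rat" where
  "power_sum r M = (\<Sum>i\<in>#M. r ^ i)"

lemma power_sum_empty [simp]: "power_sum r {#} = 0"
  and power_sum_add_mset [simp]: "power_sum r (add_mset i M) = r ^ i + power_sum r M"
  and power_sum_union [simp]: "power_sum r (M + N) = power_sum r M + power_sum r N"
  and power_sum_replicate_mset [simp]: "power_sum r (replicate_mset n i) = of_nat n * r ^ i"
  by (simp_all add: power_sum_def)

lemma S_eq_range_power_sum: "S r = range (power_sum r)"
proof (intro equalityI subsetI)
  fix x assume "x \<in> S r"
  then show "x \<in> range (power_sum r)"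
  proof induction
    case zero
    show ?case by (metis power_sum_empty rangeI)
  next
    case (add_pow x n)
    then obtain M where "x = power_sum r M" by blast
    then have "x + r ^ n = power_sum r (add_mset n M)" by simp
    then show ?case by blast
  qed
next
  fix x assume "x \<in> range (power_sum r)"
  then obtain M where x: "x = power_sum r M" by blast
  have "power_sum r M \<in> S r"
    by (induction M) (simp_all add: S.zero, metis S.add_pow add.commute)
  then show "x \<in> S r" using x by simp
qed

lemma power_sum_in_S [simp]: "power_sum r M \<in> S r"
  by (simp add: S_eq_range_power_sum)

lemma power_in_S: "r ^ i \<in> S r"
  using power_sum_in_S[of r "{#i#}"] by simp

lemma power_sum_nonneg: "0 < r \<Longrightarrow> 0 \<le> power_sum r M"
  by (induction M) simp_all

lemma power_sum_pos: "0 < r \<Longrightarrow> M \<noteq> {#} \<Longrightarrow> 0 < power_sum r M"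
  by (induction M) (auto intro: add_pos_nonneg power_sum_nonneg)

lemma power_sum_eq_0_iff: "0 < r \<Longrightarrow> power_sum r M = 0 \<longleftrightarrow> M = {#}"
  using power_sum_pos by fastforce

lemma size_le_power_sum: "1 \<le> r \<Longrightarrow> of_nat (size M) \<le> power_sum r M"
  by (induction M) (simp_all add: add_mono one_le_power)

section \<open>Digit expansions in a rational base\<close>

lemma sum_mset_image_eq_sum_count:
  fixes f :: "nat \<Rightarrow> 'a::comm_semiring_1"
  assumes "set_mset M \<subseteq> {..<N}"
  shows "(\<Sum>i\<in>#M. f i) = (\<Sum>i<N. of_nat (count M i) * f i)"
  using assms
proof (induction M)
  case (add a M)
  have "of_nat (count (add_mset a M) i) * f i = of_nat (count M i) * f i + (if i = a then f i else 0)"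
    for i by (simp add: algebra_simps)
  then have "(\<Sum>i<N. of_nat (count (add_mset a M) i) * f i)
      = (\<Sum>i<N. of_nat (count M i) * f i) + (\<Sum>i<N. if i = a then f i else 0)"
    by (simp add: sum.distrib)
  with add show ?case by (simp add: add.commute)
qed simp

lemma power_sum_eq_digit_sum:
  "set_mset M \<subseteq> {..<N} \<Longrightarrow> power_sum r M = (\<Sum>i<N. of_nat (count M i) * r ^ i)"
  unfolding power_sum_def by (rule sum_mset_image_eq_sum_count)

lemma size_eq_digit_sum:
  assumes "set_mset (M :: nat multiset) \<subseteq> {..<N}"
  shows "size M = (\<Sum>i<N. count M i)"
proof -
  have "size M = (\<Sum>i\<in>set_mset M. count M i)"
    by (simp add: size_multiset_overloaded_eq)
  also have "\<dots> = (\<Sum>i<N. count M i)"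
    using assms by (intro sum.mono_neutral_left) (auto simp: not_in_iff)
  finally show ?thesis .
qed

lemma multisets_bounded:
  fixes M W :: "nat multiset"
  obtains N :: nat where "set_mset M \<subseteq> {..<Suc N}" and "set_mset W \<subseteq> {..<Suc N}"
proof -
  obtain N where "\<forall>i\<in>set_mset M \<union> set_mset W. i \<le> N"
    using finite_nat_set_iff_bounded_le by blast
  then show thesis by (intro that[of N]) (auto simp: less_Suc_eq_le)
qed

lemma digit_sum_Suc_shift:
  fixes r :: "'a::comm_semiring_1"
  shows "(\<Sum>i<Suc N. of_nat (c i) * r ^ i) = of_nat (c 0) + r * (\<Sum>i<N. of_nat (c (Suc i)) * r ^ i)"
  unfolding sum.lessThan_Suc_shift sum_distrib_left by (simp add: ac_simps)

lemma digit_sum_reverse: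
  fixes r :: "'a::field"
  assumes "r \<noteq> 0"
  shows "(\<Sum>i<Suc N. of_nat (c i) * r ^ i) = r ^ N * (\<Sum>i<Suc N. of_nat (c (N - i)) * inverse r ^ i)"
proof -
  have "r ^ N * (of_nat (c (N - i)) * inverse r ^ i) = of_nat (c (N - i)) * r ^ (N - i)"
    if "i < Suc N" for i
  proof -
    have "r ^ (N - i) = r ^ N / r ^ i"
      using that assms by (simp add: power_diff)
    then show ?thesis by (simp add: power_inverse divide_inverse)
  qed
  then have "r ^ N * (\<Sum>i<Suc N. of_nat (c (N - i)) * inverse r ^ i)
      = (\<Sum>i<Suc N. of_nat (c (Suc N - Suc i)) * r ^ (Suc N - Suc i))"
    unfolding sum_distrib_left by (intro sum.cong) simp_all
  also have "\<dots> = (\<Sum>i<Suc N. of_nat (c i) * r ^ i)"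
    by (rule sum.nat_diff_reindex)
  finally show ?thesis ..
qed

lemma digit_sum_times_denominator_power_in_Nats:
  fixes a b :: nat and r :: rat
  assumes "0 < b" and r: "r = of_nat a / of_nat b"
  shows "(\<Sum>i<N. of_nat (c i) * r ^ i) * of_nat b ^ N \<in> \<nat>"
proof -
  have "of_nat (c i) * r ^ i * of_nat b ^ N = of_nat (c i * a ^ i * b ^ (N - i))" if "i < N" for i
  proof -
    have "(of_nat b :: rat) ^ N = of_nat b ^ i * of_nat b ^ (N - i)"
      using that by (metis le_add_diff_inverse less_imp_le power_add)
    then have "r ^ i * of_nat b ^ N = (r * of_nat b) ^ i * of_nat b ^ (N - i)"
      by (simp only: power_mult_distrib mult.assoc)
    also have "r * of_nat b = of_nat a"
      using \<open>0 < b\<close> by (simp add: r)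
    finally show ?thesis by (simp add: mult.assoc)
  qed
  then have "(\<Sum>i<N. of_nat (c i) * r ^ i) * of_nat b ^ N = (\<Sum>i<N. of_nat (c i * a ^ i * b ^ (N - i)))"
    unfolding sum_distrib_right by (intro sum.cong) auto
  then show ?thesis by (simp only: of_nat_sum[symmetric] of_nat_in_Nats)
qed

lemma numerator_dvd_lowest_digit_diff:
  fixes a b :: nat and r :: rat
  assumes "coprime a b" and "0 < b" and r: "r = of_nat a / of_nat b"
    and eq: "(\<Sum>i<Suc N. of_nat (c i) * r ^ i) = (\<Sum>i<Suc N. of_nat (w i) * r ^ i)"
  shows "int a dvd int (c 0) - int (w 0)"
proof -
  define X where "X = (\<Sum>i<N. of_nat (c (Suc i)) * r ^ i)"
  define Y where "Y = (\<Sum>i<N. of_nat (w (Suc i)) * r ^ i)"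
  obtain A B where A: "X * of_nat b ^ N = of_nat A" and B: "Y * of_nat b ^ N = of_nat B"
    using digit_sum_times_denominator_power_in_Nats[OF \<open>0 < b\<close> r]
    unfolding X_def Y_def by (metis Nats_cases)
  have rb: "r * of_nat b = of_nat a" using \<open>0 < b\<close> by (simp add: r)
  have "of_nat (c 0) + r * X = of_nat (w 0) + r * Y"
    using eq unfolding digit_sum_Suc_shift X_def Y_def .
  then have "(of_nat (c 0) + r * X) * of_nat b ^ Suc N = (of_nat (w 0) + r * Y) * of_nat b ^ Suc N"
    by simp
  then have "of_nat (c 0) * of_nat b ^ Suc N + (r * of_nat b) * (X * of_nat b ^ N)
      = of_nat (w 0) * of_nat b ^ Suc N + (r * of_nat b) * (Y * of_nat b ^ N)"
    by (simp add: algebra_simps)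
  then have "(of_nat (c 0 * b ^ Suc N + a * A) :: rat) = of_nat (w 0 * b ^ Suc N + a * B)"
    unfolding rb A B by simp
  then have "int (c 0 * b ^ Suc N + a * A) = int (w 0 * b ^ Suc N + a * B)"
    by (simp only: of_nat_eq_iff)
  then have "(int (c 0) - int (w 0)) * int b ^ Suc N = int a * (int B - int A)"
    by (simp add: algebra_simps)
  then have "int a dvd (int (c 0) - int (w 0)) * int b ^ Suc N"
    by simp
  moreover have "coprime (int a) (int b ^ Suc N)"
    using \<open>coprime a b\<close> by simp
  ultimately show ?thesis
    using coprime_dvd_mult_left_iff by blast
qed

lemma lowest_digit_eq_add_numerator_multiple:
  fixes a b :: nat and r :: rat
  assumes "coprime a b" and "0 < b" and "r = of_nat a / of_nat b"
    and "(\<Sum>i<Suc N. of_nat (c i) * r ^ i) = (\<Sum>i<Suc N. of_nat (w i) * r ^ i)"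
    and "w 0 < a"
  obtains k where "c 0 = w 0 + a * k"
proof -
  obtain t where t: "int (c 0) - int (w 0) = int a * t"
    using numerator_dvd_lowest_digit_diff[OF assms(1-4)] by (elim dvdE)
  have "0 \<le> t"
  proof (rule ccontr)
    assume "\<not> 0 \<le> t"
    then have "int a * t \<le> int a * -1" by (intro mult_left_mono) simp_all
    with t \<open>w 0 < a\<close> show False by linarith
  qed
  then obtain k where "t = int k" using nonneg_int_cases by blast
  with t have "int (c 0) = int (w 0 + a * k)" by simp
  then show thesis by (intro that) (simp only: of_nat_eq_iff)
qed

text \<open>
  Induction on the number of digits: the lowest digits of \<open>c\<close> and \<open>w\<close> differ by \<open>a k\<close> with
  \<open>k \<ge> 0\<close>; trading these \<open>a k\<close> copies of \<open>r\<^sup>0\<close> in \<open>c\<close> for \<open>b k\<close> copies of \<open>r\<^sup>1\<close> makes the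
  lowest digits agree and changes the length by \<open>(a - b) k\<close>.
\<close>

lemma digit_sum_exchange:
  fixes a b :: nat and r :: rat
  assumes "coprime a b" and "0 < b" and r: "r = of_nat a / of_nat b"
  shows "(\<Sum>i<Suc N. of_nat (c i) * r ^ i) = (\<Sum>i<Suc N. of_nat (w i) * r ^ i)
    \<Longrightarrow> \<forall>i<N. w i < a \<Longrightarrow> \<exists>T. int (\<Sum>i<Suc N. c i) = int (\<Sum>i<Suc N. w i) + (int a - int b) * int T"
proof (induction N arbitrary: c w)
  case 0
  then show ?case by (intro exI[of _ 0]) simp
next
  case (Suc N)
  have "0 < a" using Suc.prems(2) by auto
  obtain k where c0: "c 0 = w 0 + a * k"
    using lowest_digit_eq_add_numerator_multiple[OF assms Suc.prems(1)] Suc.prems(2) by blast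
  define c' where "c' i = c (Suc i) + (if i = 0 then b * k else 0)" for i
  have value_c':
      "(\<Sum>i<Suc N. of_nat (c' i) * r ^ i) = (\<Sum>i<Suc N. of_nat (c (Suc i)) * r ^ i) + of_nat (b * k)"
    and length_c': "(\<Sum>i<Suc N. c' i) = (\<Sum>i<Suc N. c (Suc i)) + b * k"
  proof -
    have "of_nat (c' i) * r ^ i = of_nat (c (Suc i)) * r ^ i + (if i = 0 then of_nat (b * k) else 0)" for i
      by (simp add: c'_def distrib_right)
    then show "(\<Sum>i<Suc N. of_nat (c' i) * r ^ i) = (\<Sum>i<Suc N. of_nat (c (Suc i)) * r ^ i) + of_nat (b * k)"
      by (simp only: sum.distrib sum.delta) simp
    show "(\<Sum>i<Suc N. c' i) = (\<Sum>i<Suc N. c (Suc i)) + b * k"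
      by (simp only: c'_def sum.distrib sum.delta) simp
  qed
  have "r * of_nat (b * k) = of_nat a * of_nat k" using \<open>0 < b\<close> by (simp add: r)
  moreover have "(of_nat (c 0) :: rat) = of_nat (w 0) + of_nat a * of_nat k" by (simp add: c0)
  moreover note Suc.prems(1)[unfolded digit_sum_Suc_shift[where N = "Suc N"]]
  ultimately have "r * (\<Sum>i<Suc N. of_nat (c' i) * r ^ i) = r * (\<Sum>i<Suc N. of_nat (w (Suc i)) * r ^ i)"
    unfolding value_c' distrib_left by linarith
  moreover have "r \<noteq> 0" using \<open>0 < a\<close> \<open>0 < b\<close> by (simp add: r)
  ultimately have "(\<Sum>i<Suc N. of_nat (c' i) * r ^ i) = (\<Sum>i<Suc N. of_nat (w (Suc i)) * r ^ i)"
    by simp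
  then obtain T where T: "int (\<Sum>i<Suc N. c' i) = int (\<Sum>i<Suc N. w (Suc i)) + (int a - int b) * int T"
    using Suc.IH Suc.prems(2) by fastforce
  have "int (\<Sum>i<Suc (Suc N). c i) = int (\<Sum>i<Suc (Suc N). w i) + (int a - int b) * int (T + k)"
    using T c0 unfolding length_c' sum.lessThan_Suc_shift[of _ "Suc N"] by (simp add: algebra_simps)
  then show ?case by blast
qed

lemma power_sum_eq_imp_size_exchange_low:
  fixes a b :: nat
  assumes "coprime a b" and "0 < b" and "r = of_nat a / of_nat b"
    and "power_sum r M = power_sum r W" and "\<forall>i. count W i < a"
  shows "\<exists>T. int (size M) = int (size W) + (int a - int b) * int T"
proof -
  obtain N where "set_mset M \<subseteq> {..<Suc N}" and "set_mset W \<subseteq> {..<Suc N}"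
    by (rule multisets_bounded)
  then show ?thesis
    using digit_sum_exchange[OF assms(1-3), where N = N and c = "count M" and w = "count W"] assms(4,5)
    by (simp add: power_sum_eq_digit_sum size_eq_digit_sum)
qed

lemma power_sum_eq_imp_size_exchange_high:
  fixes a b :: nat
  assumes "coprime a b" and "0 < a" and "0 < b" and r: "r = of_nat a / of_nat b"
    and "power_sum r M = power_sum r W" and "\<forall>i>0. count W i < b"
  shows "\<exists>T. int (size M) = int (size W) + (int b - int a) * int T"
proof -
  obtain N where M: "set_mset M \<subseteq> {..<Suc N}" and W: "set_mset W \<subseteq> {..<Suc N}"
    by (rule multisets_bounded)
  have size_rev: "(\<Sum>i<Suc N. count X (N - i)) = size X" if "set_mset X \<subseteq> {..<Suc N}" for X
    using sum.nat_diff_reindex[of "count X" "Suc N"] size_eq_digit_sum[OF that] by simp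
  have "r \<noteq> 0" using assms(2,3) by (simp add: r)
  have "r ^ N * (\<Sum>i<Suc N. of_nat (count M (N - i)) * inverse r ^ i)
      = r ^ N * (\<Sum>i<Suc N. of_nat (count W (N - i)) * inverse r ^ i)"
    using assms(5) unfolding power_sum_eq_digit_sum[OF M] power_sum_eq_digit_sum[OF W]
      digit_sum_reverse[OF \<open>r \<noteq> 0\<close>] .
  then have "(\<Sum>i<Suc N. of_nat (count M (N - i)) * inverse r ^ i)
      = (\<Sum>i<Suc N. of_nat (count W (N - i)) * inverse r ^ i)"
    using \<open>r \<noteq> 0\<close> by simp
  moreover have "inverse r = of_nat b / of_nat a" by (simp add: r)
  moreover have "\<forall>i<N. count W (N - i) < b" using assms(6) by simp
  ultimately obtain T where
    "int (\<Sum>i<Suc N. count M (N - i)) = int (\<Sum>i<Suc N. count W (N - i)) + (int b - int a) * int T"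
    using digit_sum_exchange[where a = b and b = a and r = "inverse r" and N = N
        and c = "\<lambda>i. count M (N - i)" and w = "\<lambda>i. count W (N - i)"]
      assms(1,2) by (auto simp: coprime_commute)
  then show ?thesis
    unfolding size_rev[OF M] size_rev[OF W] by blast
qed

lemma atoms_S_subset_powers:
  assumes "0 < r"
  shows "atoms (S r) \<subseteq> range (\<lambda>i. r ^ i)"
proof
  fix x assume "x \<in> atoms (S r)"
  then have "x \<in> S r" and "x \<noteq> 0"
    and indecomposable: "\<not> (\<exists>b\<in>S r. \<exists>c\<in>S r. b \<noteq> 0 \<and> c \<noteq> 0 \<and> x = b + c)"
    unfolding atoms_def by blast+
  then obtain M where M: "x = power_sum r M"
    unfolding S_eq_range_power_sum by blast
  with \<open>x \<noteq> 0\<close> obtain i M' where M': "M = add_mset i M'"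
    by (metis multiset_cases power_sum_empty)
  have "M' = {#}"
  proof (rule ccontr)
    assume "M' \<noteq> {#}"
    then have "power_sum r M' \<noteq> 0" using power_sum_eq_0_iff[OF assms] by blast
    moreover have "r ^ i \<noteq> 0" using assms by simp
    moreover have "x = r ^ i + power_sum r M'" using M M' by simp
    ultimately show False
      using indecomposable power_in_S[of r i] power_sum_in_S[of r M'] by blast
  qed
  then show "x \<in> range (\<lambda>i. r ^ i)" using M M' by simp
qed

lemma lengths_S_eq:
  assumes "0 < r" and "\<And>i. r ^ i \<in> atoms (S r)"
  shows "lengths (S r) x = size ` {M. power_sum r M = x}"
proof (intro equalityI subsetI)
  fix n assume "n \<in> lengths (S r) x"
  then obtain z where z: "set_mset z \<subseteq> atoms (S r)" "sum_mset z = x" and n: "n = size z"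
    unfolding lengths_def factorizations_def by blast
  have powers: "y \<in> range (\<lambda>i. r ^ i)" if "y \<in># z" for y
    using that z(1) atoms_S_subset_powers[OF assms(1)] by blast
  define M where "M = image_mset (inv (\<lambda>i. r ^ i)) z"
  have "image_mset (\<lambda>i. r ^ i) M = image_mset ((\<lambda>i. r ^ i) \<circ> inv (\<lambda>i. r ^ i)) z"
    by (simp add: M_def multiset.map_comp)
  also have "\<dots> = image_mset id z"
    by (rule image_mset_cong) (simp add: f_inv_into_f powers)
  finally have "z = image_mset (\<lambda>i. r ^ i) M" by simp
  then show "n \<in> size ` {M. power_sum r M = x}"
    using z(2) n by (auto simp: power_sum_def)
next
  fix n assume "n \<in> size ` {M. power_sum r M = x}"
  then obtain M where "power_sum r M = x" and "n = size M" by blast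
  moreover have "image_mset (\<lambda>i. r ^ i) M \<in> factorizations (S r) (power_sum r M)"
    using assms(2) unfolding factorizations_def power_sum_def by auto
  ultimately show "n \<in> lengths (S r) x"
    unfolding lengths_def by (metis image_eqI size_image_mset)
qed

lemma power_in_atoms_S:
  fixes a b :: nat
  assumes "coprime a b" and "2 \<le> a" and "2 \<le> b" and r: "r = of_nat a / of_nat b"
  shows "r ^ i \<in> atoms (S r)"
proof -
  have "0 < r" using assms(2,3) by (simp add: r)
  have size_le_1: "size M \<le> 1" if M: "power_sum r M = power_sum r {#i#}" for M
  proof -
    have "a \<noteq> b" using assms(1,2) by auto
    then consider "a < b" | "b < a" by linarith
    then show ?thesis
    proof cases
      case 1
      have "\<forall>j. count {#i#} j < a" using assms(2) by simp
      then obtain T where "int (size M) = 1 + (int a - int b) * int T"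
        using power_sum_eq_imp_size_exchange_low[OF assms(1) _ r M] assms(3) by auto
      moreover have "(int a - int b) * int T \<le> 0" using 1 by (simp add: mult_nonpos_nonneg)
      ultimately show ?thesis by linarith
    next
      case 2
      have "\<forall>j>0. count {#i#} j < b" using assms(3) by simp
      then obtain T where "int (size M) = 1 + (int b - int a) * int T"
        using power_sum_eq_imp_size_exchange_high[OF assms(1) _ _ r M] assms(2,3) by auto
      moreover have "(int b - int a) * int T \<le> 0" using 2 by (simp add: mult_nonpos_nonneg)
      ultimately show ?thesis by linarith
    qed
  qed
  have "\<not> (\<exists>p\<in>S r. \<exists>q\<in>S r. p \<noteq> 0 \<and> q \<noteq> 0 \<and> r ^ i = p + q)"
  proof
    assume "\<exists>p\<in>S r. \<exists>q\<in>S r. p \<noteq> 0 \<and> q \<noteq> 0 \<and> r ^ i = p + q"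
    then obtain P Q
      where "power_sum r P \<noteq> 0" and "power_sum r Q \<noteq> 0" and "r ^ i = power_sum r P + power_sum r Q"
      unfolding S_eq_range_power_sum by blast
    then have "P \<noteq> {#}" and "Q \<noteq> {#}" and "size (P + Q) \<le> 1"
      using size_le_1[of "P + Q"] by auto
    then show False
      by (simp add: Suc_le_eq flip: size_eq_0_iff_empty)
  qed
  then show ?thesis
    using \<open>0 < r\<close> power_in_S[of r i] unfolding atoms_def by auto
qed

lemma positive_rat_nat_fraction:
  fixes r :: rat
  assumes "0 < r"
  obtains a b :: nat where "r = of_nat a / of_nat b" and "coprime a b" and "0 < a" and "0 < b"
    and "numer r = int a" and "denom r = int b"
proof -
  have q: "quotient_of r = (numer r, denom r)" by (simp add: numer_def denom_def)
  have "0 < denom r" using quotient_of_denom_pos[OF q] .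
  moreover have r: "r = of_int (numer r) / of_int (denom r)" using quotient_of_div[OF q] .
  ultimately have "0 < numer r"
    using assms by (metis of_int_0_less_iff of_int_less_0_iff order_less_asym zero_less_divide_iff)
  moreover have "coprime (numer r) (denom r)" using quotient_of_coprime[OF q] .
  ultimately show thesis
    using \<open>0 < denom r\<close> r
    by (intro that[of "nat (numer r)" "nat (denom r)"]) (simp_all add: coprime_int_iff[symmetric])
qed

section \<open>The case \<open>r < 1\<close>\<close>

lemma atoms_S_unit_fraction:
  assumes "2 \<le> b"
  shows "atoms (S (1 / of_nat b)) = {}"
proof -
  let ?r = "1 / of_nat b :: rat"
  have "?r ^ i \<notin> atoms (S ?r)" for i
  proof -
    have "?r ^ i = ?r ^ Suc i + power_sum ?r (replicate_mset (b - 1) (Suc i))"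
      using assms by (simp add: of_nat_diff field_simps)
    moreover have "?r ^ Suc i \<noteq> 0" and "power_sum ?r (replicate_mset (b - 1) (Suc i)) \<noteq> 0"
      using assms by simp_all
    ultimately show ?thesis
      unfolding atoms_def using power_in_S power_sum_in_S by blast
  qed
  then show ?thesis using atoms_S_subset_powers[of ?r] assms by fastforce
qed

lemma power_sum_exchange_up:
  fixes a b :: nat
  assumes "0 < b" and r: "r = of_nat a / of_nat b" and "a \<le> count M i"
  defines "M' \<equiv> M - replicate_mset a i + replicate_mset b (Suc i)"
  shows "power_sum r M' = power_sum r M" and "size M' = size M - a + b"
proof -
  have sub: "replicate_mset a i \<subseteq># M" using assms(3) by (simp add: subseteq_mset_def)
  then have M: "M = M - replicate_mset a i + replicate_mset a i" by simp
  have "of_nat b * r ^ Suc i = of_nat a * r ^ i" using assms(1) by (simp add: r)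
  then show "power_sum r M' = power_sum r M"
    unfolding M'_def by (subst (2) M) simp
  show "size M' = size M - a + b"
    unfolding M'_def by (simp only: size_union size_Diff_submset[OF sub] size_replicate_mset)
qed

lemma power_sum_lengths_unbounded:
  fixes a b :: nat
  assumes "0 < a" and "a < b" and "r = of_nat a / of_nat b" and "a \<le> count M i"
  shows "\<exists>M'. power_sum r M' = power_sum r M \<and> n \<le> size M'"
proof -
  have "\<exists>M' j. power_sum r M' = power_sum r M \<and> n \<le> size M' \<and> a \<le> count M' j"
  proof (induction n)
    case 0
    then show ?case using assms(4) by blast
  next
    case (Suc n)
    then obtain M' j where M': "power_sum r M' = power_sum r M" "n \<le> size M'" "a \<le> count M' j"
      by blast
    let ?M'' = "M' - replicate_mset a j + replicate_mset b (Suc j)"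
    have "power_sum r ?M'' = power_sum r M" and "Suc n \<le> size ?M''" and "a \<le> count ?M'' (Suc j)"
      using power_sum_exchange_up[OF _ assms(3) M'(3)] M' assms(1,2) by auto
    then show ?case by blast
  qed
  then show ?thesis by blast
qed

lemma elasticity_S_proper_fraction:
  fixes a b :: nat
  assumes "coprime a b" and "2 \<le> a" and "a < b" and r: "r = of_nat a / of_nat b"
    and "x \<in> S r" and "x \<noteq> 0"
  shows "elasticity (S r) x \<in> {1, \<infinity>}"
proof -
  have "0 < r" using assms(2,3) by (simp add: r)
  have lengths: "lengths (S r) x = size ` {M. power_sum r M = x}"
    using power_in_atoms_S[OF assms(1,2) _ r] assms(2,3) by (intro lengths_S_eq[OF \<open>0 < r\<close>]) simp
  show ?thesis
  proof (cases "\<exists>M i. power_sum r M = x \<and> a \<le> count M i")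
    case True
    then obtain M i where "power_sum r M = x" and "a \<le> count M i" by blast
    then have "\<exists>l\<in>lengths (S r) x. n \<le> l" for n
      using power_sum_lengths_unbounded[OF _ assms(3) r, of M i n] assms(2) unfolding lengths by auto
    then show ?thesis using elasticity_eq_infinity[OF assms(6)] by simp
  next
    case False
    then have small_digits: "\<forall>i. count M i < a" if "power_sum r M = x" for M
      using that by (simp add: not_le)
    have "size M \<le> size W" if MW: "power_sum r M = x" "power_sum r W = x" for M W
    proof -
      obtain T where "int (size M) = int (size W) + (int a - int b) * int T"
        using power_sum_eq_imp_size_exchange_low[OF assms(1) _ r, of M W] MW small_digits assms(3)
        by auto
      moreover have "(int a - int b) * int T \<le> 0" using assms(3) by (simp add: mult_nonpos_nonneg)
      ultimately show ?thesis by linarith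
    qed
    moreover obtain M where "power_sum r M = x"
      using assms(5) unfolding S_eq_range_power_sum by blast
    ultimately have "lengths (S r) x = {size M}"
      unfolding lengths by (auto intro: antisym)
    then show ?thesis using elasticity_eq_one[OF assms(6)] by simp
  qed
qed

lemma elasticity_set_S_less_one:
  assumes "0 < r" and "r < 1" and "atomic (S r)"
  shows "elasticity_set (S r) = {1, \<infinity>}"
proof -
  obtain a b :: nat where r: "r = of_nat a / of_nat b" and "coprime a b" and "0 < a" and "0 < b"
    using positive_rat_nat_fraction[OF assms(1)] by metis
  have "a < b" using assms(2) \<open>0 < b\<close> by (simp add: r)
  have "a \<noteq> 1"
  proof
    assume "a = 1"
    then have "atoms (S r) = {}"
      using atoms_S_unit_fraction[of b] \<open>a < b\<close> by (simp add: r)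
    moreover have "lengths (S r) 1 \<noteq> {}"
      using assms(3) power_in_S[of r 0] unfolding atomic_def by simp
    ultimately show False
      unfolding lengths_def factorizations_def by auto
  qed
  then have "2 \<le> a" and "2 \<le> b" using \<open>0 < a\<close> \<open>a < b\<close> by simp_all
  let ?x = "power_sum r (replicate_mset a 0)"
  have "?x \<noteq> 0" using \<open>0 < a\<close> by simp
  moreover have "\<exists>l\<in>lengths (S r) ?x. n \<le> l" for n
    using power_sum_lengths_unbounded[OF \<open>0 < a\<close> \<open>a < b\<close> r, of "replicate_mset a 0" 0 n]
      lengths_S_eq[OF assms(1) power_in_atoms_S[OF \<open>coprime a b\<close> \<open>2 \<le> a\<close> \<open>2 \<le> b\<close> r]]
    by auto
  ultimately have "\<infinity> \<in> elasticity_set (S r)"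
    unfolding elasticity_set_def by (metis elasticity_eq_infinity power_sum_in_S image_eqI)
  moreover have "elasticity_set (S r) \<subseteq> {1, \<infinity>}"
    using elasticity_S_proper_fraction[OF \<open>coprime a b\<close> \<open>2 \<le> a\<close> \<open>a < b\<close> r]
    unfolding elasticity_set_def by (auto simp: elasticity_def)
  ultimately show ?thesis using one_in_elasticity_set[OF S.zero] by blast
qed

section \<open>The case \<open>r \<in> \<nat>\<close>\<close>

lemma atoms_S_Nats:
  assumes "r \<in> \<nat>" and "0 < r"
  shows "atoms (S r) \<subseteq> {1}"
proof
  fix x assume x: "x \<in> atoms (S r)"
  obtain n where "r = of_nat n" using assms(1) by (rule Nats_cases)
  moreover obtain i where "x = r ^ i" using x atoms_S_subset_powers[OF assms(2)] by blast
  ultimately obtain k where k: "x = of_nat k" by (metis of_nat_power)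
  have "k = 1"
  proof (rule ccontr)
    assume "k \<noteq> 1"
    moreover have "k \<noteq> 0" using x k by (simp add: atoms_def)
    ultimately have "2 \<le> k" by simp
    then have "x = r ^ 0 + power_sum r (replicate_mset (k - 1) 0)"
      and "power_sum r (replicate_mset (k - 1) 0) \<noteq> 0"
      by (simp_all add: k of_nat_diff)
    moreover have "r ^ 0 \<noteq> 0" by simp
    ultimately show False
      using x power_in_S[of r 0] power_sum_in_S[of r] unfolding atoms_def by blast
  qed
  then show "x \<in> {1}" by (simp add: k)
qed

lemma elasticity_set_S_Nats:
  assumes "r \<in> \<nat>" and "0 < r" and "atomic (S r)"
  shows "elasticity_set (S r) = {1}"
proof -
  have "elasticity (S r) x = 1" if x: "x \<in> S r" "x \<noteq> 0" for x
  proof -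
    have length_eq: "of_nat l = x" if "l \<in> lengths (S r) x" for l
    proof -
      obtain z where "set_mset z \<subseteq> {1}" and "sum_mset z = x" and "l = size z"
        using \<open>l \<in> lengths (S r) x\<close> atoms_S_Nats[OF assms(1,2)]
        unfolding lengths_def factorizations_def by blast
      then have "sum_mset z = sum_mset (replicate_mset (size z) (1 :: rat))"
        by (metis set_mset_subset_singletonD)
      with \<open>sum_mset z = x\<close> \<open>l = size z\<close> show ?thesis by simp
    qed
    obtain l where "l \<in> lengths (S r) x"
      using assms(3) x unfolding atomic_def by blast
    moreover have "l' = l" if "l' \<in> lengths (S r) x" for l'
      using length_eq[OF that] length_eq[OF \<open>l \<in> lengths (S r) x\<close>] by simp
    ultimately have "lengths (S r) x = {l}" by blast
    then show ?thesis using elasticity_eq_one[OF \<open>x \<noteq> 0\<close>] by blast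
  qed
  then show ?thesis
    unfolding elasticity_set_def using S.zero by (auto simp: elasticity_def)
qed

section \<open>The case \<open>r = (d + 1)/d\<close>\<close>

lemma elasticity_S_rational:
  assumes "1 \<le> r" and "\<And>i. r ^ i \<in> atoms (S r)" and "x \<in> S r" and "x \<noteq> 0"
  shows "\<exists>q\<ge>1. elasticity (S r) x = ereal (of_rat q)"
proof -
  have lengths: "lengths (S r) x = size ` {M. power_sum r M = x}"
    using assms(1,2) by (intro lengths_S_eq) simp_all
  obtain M where "power_sum r M = x"
    using assms(3) unfolding S_eq_range_power_sum by blast
  then have "lengths (S r) x \<noteq> {}" unfolding lengths by blast
  obtain n\<^sub>0 :: nat where "x < of_nat n\<^sub>0" using reals_Archimedean2 by blast
  have "lengths (S r) x \<subseteq> {..<n\<^sub>0}"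
  proof
    fix n assume "n \<in> lengths (S r) x"
    then obtain M where "power_sum r M = x" and "n = size M" unfolding lengths by blast
    then have "of_nat n \<le> x" using size_le_power_sum[OF assms(1)] by blast
    with \<open>x < of_nat n\<^sub>0\<close> have "(of_nat n :: rat) < of_nat n\<^sub>0" by linarith
    then show "n \<in> {..<n\<^sub>0}" by simp
  qed
  then have "finite (lengths (S r) x)" by (rule finite_subset) simp
  with \<open>lengths (S r) x \<noteq> {}\<close> show ?thesis using elasticity_rational[OF assms(4)] by blast
qed

lemma succ_ratio_length_bounds:
  fixes d :: nat
  assumes "2 \<le> d" and r: "r = of_nat (d + 1) / of_nat d" and "power_sum r M = power_sum r W"
  shows "(\<forall>i. count W i \<le> d) \<Longrightarrow> size W \<le> size M"
    and "(\<forall>i>0. count W i < d) \<Longrightarrow> size M \<le> size W"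
proof -
  have "coprime (d + 1) d" by simp
  assume "\<forall>i. count W i \<le> d"
  then obtain T where "int (size M) = int (size W) + (int (d + 1) - int d) * int T"
    using power_sum_eq_imp_size_exchange_low[OF \<open>coprime (d + 1) d\<close> _ r assms(3)] assms(1)
    by (auto simp: less_Suc_eq_le)
  then show "size W \<le> size M" by simp
next
  have "coprime (d + 1) d" by simp
  assume "\<forall>i>0. count W i < d"
  then obtain T where "int (size M) = int (size W) + (int d - int (d + 1)) * int T"
    using power_sum_eq_imp_size_exchange_high[OF \<open>coprime (d + 1) d\<close> _ _ r assms(3)] assms(1)
    by auto
  then show "size M \<le> size W" by simp
qed

lemma succ_ratio_power_identity:
  fixes d :: nat and r :: "'a::field_char_0"
  assumes "0 < d" and r: "r = of_nat (d + 1) / of_nat d"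
  shows "of_nat d * r ^ k = of_nat d + (\<Sum>j<k. r ^ j)"
proof (induction k)
  case (Suc k)
  have "of_nat d * r ^ Suc k = (of_nat d * r) * r ^ k" by (simp add: ac_simps)
  also have "of_nat d * r = of_nat d + 1" using assms(1) by (simp add: r)
  finally show ?case using Suc.IH by (simp add: distrib_right)
qed simp

text \<open>
  With \<open>k = (p - s) d\<close> and \<open>U\<close> the \<open>(s - 1) d\<close> powers just above \<open>r\<^sup>k\<close>, the identity above
  gives two expansions of the same element: \<open>W\<^sub>m\<^sub>i\<^sub>n\<close> of length \<open>s d\<close> with all digits at most \<open>d\<close>,
  and \<open>W\<^sub>m\<^sub>a\<^sub>x\<close> of length \<open>p d\<close> with all digits but the constant one below \<open>d\<close>.
\<close>

lemma elasticity_S_succ_ratio_attains: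
  fixes d p s :: nat
  assumes "2 \<le> d" and r: "r = of_nat (d + 1) / of_nat d" and "0 < s" and "s < p"
  shows "\<exists>x\<in>S r. elasticity (S r) x = ereal (of_rat (of_nat p / of_nat s))"
proof -
  have "0 < r" using assms(1) by (simp add: r)
  have lengths: "lengths (S r) y = size ` {M. power_sum r M = y}" for y
    using power_in_atoms_S[of "d + 1" d] assms(1)
    by (intro lengths_S_eq[OF \<open>0 < r\<close>]) (simp_all add: r)
  obtain s' where s: "s = Suc s'" using gr0_implies_Suc[OF assms(3)] by blast
  obtain e where p: "p = Suc (s + e)" using less_imp_Suc_add[OF assms(4)] by blast
  define k where "k = Suc e * d"
  define U where "U = mset_set {Suc k..<Suc (k + s' * d)}"
  define W\<^sub>m\<^sub>i\<^sub>n where "W\<^sub>m\<^sub>i\<^sub>n = replicate_mset d k + U"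
  define W\<^sub>m\<^sub>a\<^sub>x where "W\<^sub>m\<^sub>a\<^sub>x = replicate_mset d 0 + mset_set {..<k} + U"
  define x where "x = power_sum r W\<^sub>m\<^sub>i\<^sub>n"
  have size_W\<^sub>m\<^sub>i\<^sub>n: "size W\<^sub>m\<^sub>i\<^sub>n = s * d"
    by (simp add: W\<^sub>m\<^sub>i\<^sub>n_def U_def s)
  have size_W\<^sub>m\<^sub>a\<^sub>x: "size W\<^sub>m\<^sub>a\<^sub>x = p * d"
    by (simp add: W\<^sub>m\<^sub>a\<^sub>x_def U_def k_def s p add_mult_distrib)
  have "W\<^sub>m\<^sub>i\<^sub>n \<noteq> {#}" using assms(1) by (simp add: W\<^sub>m\<^sub>i\<^sub>n_def)
  then have "x \<noteq> 0" unfolding x_def using power_sum_eq_0_iff[OF \<open>0 < r\<close>] by blast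
  have W\<^sub>m\<^sub>a\<^sub>x: "power_sum r W\<^sub>m\<^sub>a\<^sub>x = x"
    using succ_ratio_power_identity[OF _ r, of k] assms(1)
    by (simp add: x_def W\<^sub>m\<^sub>i\<^sub>n_def W\<^sub>m\<^sub>a\<^sub>x_def power_sum_def flip: sum_unfold_sum_mset)
  have "\<forall>i. count W\<^sub>m\<^sub>i\<^sub>n i \<le> d"
    using assms(1) by (simp add: W\<^sub>m\<^sub>i\<^sub>n_def U_def count_mset_set')
  moreover have "\<forall>i>0. count W\<^sub>m\<^sub>a\<^sub>x i < d"
    using assms(1) by (simp add: W\<^sub>m\<^sub>a\<^sub>x_def U_def count_mset_set')
  ultimately have "\<forall>l\<in>lengths (S r) x. size W\<^sub>m\<^sub>i\<^sub>n \<le> l \<and> l \<le> size W\<^sub>m\<^sub>a\<^sub>x"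
    using succ_ratio_length_bounds[OF assms(1) r] W\<^sub>m\<^sub>a\<^sub>x unfolding lengths x_def by auto
  moreover have "size W\<^sub>m\<^sub>i\<^sub>n \<in> lengths (S r) x" and "size W\<^sub>m\<^sub>a\<^sub>x \<in> lengths (S r) x"
    using W\<^sub>m\<^sub>a\<^sub>x unfolding lengths x_def by auto
  ultimately have "elasticity (S r) x = ereal (of_rat (of_nat (p * d) / of_nat (s * d)))"
    using elasticity_eq_ratio[OF \<open>x \<noteq> 0\<close>] unfolding size_W\<^sub>m\<^sub>i\<^sub>n size_W\<^sub>m\<^sub>a\<^sub>x by blast
  moreover have "x \<in> S r" by (simp add: x_def)
  ultimately show ?thesis using assms(1) by auto
qed

lemma elasticity_set_S_succ_ratio:
  fixes d :: nat
  assumes "2 \<le> d" and r: "r = of_nat (d + 1) / of_nat d"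
  shows "elasticity_set (S r) = {ereal (of_rat q) | q. 1 \<le> q}"
proof (intro equalityI subsetI)
  fix e assume "e \<in> elasticity_set (S r)"
  then obtain x where x: "x \<in> S r" and e: "e = elasticity (S r) x"
    unfolding elasticity_set_def by blast
  show "e \<in> {ereal (of_rat q) | q. 1 \<le> q}"
  proof (cases "x = 0")
    case True
    then show ?thesis using e by (auto simp: elasticity_def intro!: exI[of _ 1])
  next
    case False
    have "1 \<le> r" using assms(1) by (simp add: r)
    moreover have "r ^ i \<in> atoms (S r)" for i
      using power_in_atoms_S[of "d + 1" d] assms(1) by (simp add: r)
    ultimately show ?thesis using elasticity_S_rational[OF _ _ x False] e by blast
  qed
next
  fix e assume "e \<in> {ereal (of_rat q) | q. 1 \<le> q}"
  then obtain q where e: "e = ereal (of_rat q)" and "1 \<le> q" by blast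
  show "e \<in> elasticity_set (S r)"
  proof (cases "q = 1")
    case True
    then show ?thesis using e one_in_elasticity_set[OF S.zero] by (simp add: one_ereal_def)
  next
    case False
    obtain p s :: nat where q: "q = of_nat p / of_nat s" and "0 < s"
      using positive_rat_nat_fraction[of q] \<open>1 \<le> q\<close> by (metis zero_less_one order_less_le_trans)
    with False \<open>1 \<le> q\<close> have "s < p" by (simp add: le_divide_eq)
    then obtain x where "x \<in> S r" and "elasticity (S r) x = e"
      using elasticity_S_succ_ratio_attains[OF assms \<open>0 < s\<close>] e q by metis
    then show ?thesis unfolding elasticity_set_def by blast
  qed
qed

theorem proposition4p4:
  fixes r :: rat
  assumes "r > 0" and "atomic (S r)"
  shows "(r < 1 \<longrightarrow> elasticity_set (S r) = {1, \<infinity>} \<and> \<not> fully_elastic (S r))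
       \<and> (r \<in> \<nat> \<longrightarrow> elasticity_set (S r) = {1} \<and> fully_elastic (S r))
       \<and> (r \<notin> \<nat> \<and> numer r = denom r + 1 \<longrightarrow>
            elasticity_set (S r) = {ereal (of_rat q) | q. 1 \<le> q} \<and> fully_elastic (S r))"
proof (intro conjI impI)
  assume "r < 1"
  then show "elasticity_set (S r) = {1, \<infinity>}" and "\<not> fully_elastic (S r)"
    using elasticity_set_S_less_one[OF assms(1) _ assms(2)]
      not_fully_elastic_if_elasticity_set_eq_one_infinity by auto
next
  assume "r \<in> \<nat>"
  then show "elasticity_set (S r) = {1}" and "fully_elastic (S r)"
    using elasticity_set_S_Nats[OF _ assms] fully_elastic_if_elasticity_set_eq_one power_in_S[of r 0]
    by auto
next
  assume "r \<notin> \<nat> \<and> numer r = denom r + 1"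
  moreover obtain a d :: nat
    where "r = of_nat a / of_nat d" and "numer r = int a" and "denom r = int d" and "0 < d"
    using positive_rat_nat_fraction[OF assms(1)] by metis
  ultimately have r: "r = of_nat (d + 1) / of_nat d" and "d \<noteq> 1" by auto
  then have "2 \<le> d" using \<open>0 < d\<close> by simp
  then show "elasticity_set (S r) = {ereal (of_rat q) | q. 1 \<le> q}" and "fully_elastic (S r)"
    using elasticity_set_S_succ_ratio[OF _ r] fully_elastic_if_elasticity_set_eq_all by auto
qed

end
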